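(* Let $1\le k\le n$ and $N=k(n-k)$. In the field of rational functions $\mathbb Q(x_1,\dots,x_n,m_1,\dots,m_N)$ the following identity holds: $$\sum_{J\subset\{1,\dots,n\},\ |J|=k}\ \frac{\prod_{r=1}^{N}(x_J-m_r)}{\prod_{i\in J}\prod_{j\notin J}(x_i-x_j)} \;=\; N!\cdot\prod_{i=1}^k\frac{(i-1)!}{(n-i)!},$$ where $x_J=\sum_{i\in J}x_i$.
   Context: $x_1,\dots,x_n,m_1,\dots,m_N$ are independent indeterminates. *)

theory Defs
  imports Main
begin

end

theory Submission
  imports Defs "HOL-Computational_Algebra.Polynomial" "HOL-Library.FuncSet"
begin

text \<open>Multiply the sum by \<open>k!\<close> and spread it over all \<open>k\<close>-tuples \<open>i\<close> of indices. Inserting the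
  factor \<open>\<Prod>\<^sub>a\<^sub>\<noteq>\<^sub>b (x(i a) - x(i b))\<close>, which kills tuples with repeated entries and cancels the
  part of the denominator internal to \<open>J\<close>, turns it into the \<open>k\<close>-fold tensor power of the divided
  difference on the nodes \<open>x 1, \<dots>, x n\<close>, applied to
  \<open>F z = \<Prod>\<^sub>r (z 1 + \<dots> + z k - m r) \<cdot> \<Prod>\<^sub>a\<^sub>\<noteq>\<^sub>b (z a - z b)\<close>, a polynomial of degree \<open>k (n - 1)\<close>.
  The divided difference of \<open>t ^ e\<close> is \<open>0\<close> for \<open>e < n - 1\<close> and \<open>1\<close> for \<open>e = n - 1\<close>, so on
  polynomials of degree at most \<open>k (n - 1)\<close> this functional only reads off the coefficient of
  \<open>(z 1 \<cdots> z k) ^ (n - 1)\<close>, which involves neither \<open>x\<close> nor \<open>m\<close>. The sum can therefore be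
  evaluated at \<open>x i = i\<close>, with the \<open>m r\<close> chosen to kill every term except that of
  \<open>J = {n - k + 1..n}\<close>.\<close>

section \<open>Lagrange interpolation\<close>

lemma degree_lead_coeff_prod_linear:
  fixes x :: "'b \<Rightarrow> 'a::field"
  assumes "finite A"
  shows "degree (\<Prod>q\<in>A. [:-x q, 1:]) = card A" and "lead_coeff (\<Prod>q\<in>A. [:-x q, 1:]) = 1"
proof -
  show "degree (\<Prod>q\<in>A. [:-x q, 1:]) = card A"
    using assms by (simp add: degree_prod_eq_sum_degree)
  show "lead_coeff (\<Prod>q\<in>A. [:-x q, 1:]) = 1"
    by (subst lead_coeff_prod) simp
qed

lemma prod_linear_expand:
  fixes m :: "'b \<Rightarrow> 'a::field"
  assumes "finite A"
  obtains b where "\<And>s. (\<Prod>r\<in>A. s - m r) = s ^ card A + (\<Sum>j<card A. b j * s ^ j)"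
proof
  define p where "p = (\<Prod>r\<in>A. [:-m r, 1:])"
  note deg = degree_lead_coeff_prod_linear[OF assms, of m, folded p_def]
  fix s
  have "(\<Prod>r\<in>A. s - m r) = (\<Sum>j\<le>card A. coeff p j * s ^ j)"
    using poly_altdef[of p s] deg by (simp add: p_def poly_prod)
  also have "\<dots> = s ^ card A + (\<Sum>j<card A. coeff p j * s ^ j)"
    using deg by (simp add: lessThan_Suc_atMost[symmetric])
  finally show "(\<Prod>r\<in>A. s - m r) = s ^ card A + (\<Sum>j<card A. coeff p j * s ^ j)" .
qed

text \<open>The interpolation polynomial of \<open>t\<^sup>e\<close> on the nodes \<open>x ` S\<close> is \<open>t\<^sup>e\<close> itself,
  and the left-hand side is its coefficient of \<open>t\<^sup>d\<close> in Lagrange form.\<close>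
lemma lagrange_power_sum:
  fixes x :: "'b \<Rightarrow> 'a::field"
  assumes fin: "finite S" and inj: "inj_on x S" and card: "card S = Suc d" and "e \<le> d"
  shows "(\<Sum>p\<in>S. x p ^ e / (\<Prod>q\<in>S-{p}. x p - x q)) = (if e = d then 1 else 0)"
proof -
  define L where "L p = (\<Prod>q\<in>S-{p}. [:-x q, 1:])" for p
  define w where "w p = (\<Prod>q\<in>S-{p}. x p - x q)" for p
  have degL: "degree (L p) = d" and lcL: "coeff (L p) d = 1" if "p \<in> S" for p
    using degree_lead_coeff_prod_linear[of "S-{p}" x] fin card that by (simp_all add: L_def)
  have w: "w p \<noteq> 0" if "p \<in> S" for p
    unfolding w_def using fin inj that by (auto simp: prod_zero_iff inj_on_def)
  have poly_L: "poly (L p) (x l) = (if l = p then w p else 0)" if "p \<in> S" "l \<in> S" for p l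
    using that fin by (auto simp: L_def w_def poly_prod prod_zero_iff)
  define q where "q = (\<Sum>p\<in>S. smult (x p ^ e / w p) (L p))"
  have "q = monom 1 e"
  proof (rule poly_eqI_degree[where A = "x ` S"])
    fix t assume "t \<in> x ` S"
    then obtain l where l: "l \<in> S" "t = x l" by blast
    have "poly q t = (\<Sum>p\<in>S. if p = l then x l ^ e else 0)"
      unfolding q_def poly_sum poly_smult l(2) using l(1) w poly_L by (intro sum.cong) auto
    also have "\<dots> = poly (monom 1 e) t" using fin l by (simp add: poly_monom)
    finally show "poly q t = poly (monom 1 e) t" .
  next
    have "degree q \<le> d"
      unfolding q_def by (intro degree_sum_le degree_smult_le[THEN order.trans]) (use fin in \<open>auto simp: degL\<close>)
    then show "degree q < card (x ` S)" using card card_image[OF inj] by simp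
    show "degree (monom (1::'a) e) < card (x ` S)"
      using card card_image[OF inj] \<open>e \<le> d\<close> by (simp add: degree_monom_eq)
  qed
  then have "coeff q d = (if e = d then 1 else 0)" by simp
  moreover have "coeff q d = (\<Sum>p\<in>S. x p ^ e / w p)"
    unfolding q_def coeff_sum using lcL by simp
  ultimately show ?thesis unfolding w_def by simp
qed

section \<open>Polynomial functions of bounded degree\<close>

definition monomials_eval :: "nat \<Rightarrow> ('a \<times> (nat \<Rightarrow> nat)) list \<Rightarrow> (nat \<Rightarrow> 'a::comm_ring_1) \<Rightarrow> 'a" where
  "monomials_eval k L z = (\<Sum>(c, e)\<leftarrow>L. c * (\<Prod>a<k. z a ^ e a))"

inductive poly_fun_le :: "nat \<Rightarrow> nat \<Rightarrow> ((nat \<Rightarrow> 'a::comm_ring_1) \<Rightarrow> 'a) \<Rightarrow> bool" for k where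
  const: "poly_fun_le k D (\<lambda>z. c)"
| var: "a < k \<Longrightarrow> 1 \<le> D \<Longrightarrow> poly_fun_le k D (\<lambda>z. z a)"
| add: "poly_fun_le k D F \<Longrightarrow> poly_fun_le k D G \<Longrightarrow> poly_fun_le k D (\<lambda>z. F z + G z)"
| mult: "poly_fun_le k D1 F \<Longrightarrow> poly_fun_le k D2 G \<Longrightarrow> D1 + D2 \<le> D \<Longrightarrow> poly_fun_le k D (\<lambda>z. F z * G z)"

lemma monomials_eval_append:
  "monomials_eval k (L1 @ L2) z = monomials_eval k L1 z + monomials_eval k L2 z"
  by (simp add: monomials_eval_def)

lemma monomial_mult_monomials_eval:
  "c * (\<Prod>a<k. z a ^ e a) * monomials_eval k L z =
     monomials_eval k [(c * c', \<lambda>a. e a + e' a). (c', e') \<leftarrow> L] z"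
  by (induction L) (auto simp: monomials_eval_def power_add prod.distrib algebra_simps)

lemma monomials_eval_mult:
  "monomials_eval k L1 z * monomials_eval k L2 z =
     monomials_eval k [(c1 * c2, \<lambda>a. e1 a + e2 a). (c1, e1) \<leftarrow> L1, (c2, e2) \<leftarrow> L2] z"
proof (induction L1)
  case (Cons ce L1)
  then show ?case
    using monomial_mult_monomials_eval[where c = "fst ce" and e = "snd ce" and L = L2]
    by (simp add: monomials_eval_def case_prod_beta o_def distrib_right)
qed (simp add: monomials_eval_def)

lemma poly_fun_le_monomials:
  assumes "poly_fun_le k D F"
  obtains L where "\<forall>(c, e)\<in>set L. (\<Sum>a<k. e a) \<le> D" and "F = monomials_eval k L"
  using assms
proof (induction arbitrary: thesis)
  case (const D c)
  show ?case by (rule const.prems[of "[(c, \<lambda>_. 0)]"]) (auto simp: monomials_eval_def)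
next
  case (var a D)
  let ?e = "\<lambda>b. if b = a then 1 else 0 :: nat"
  have "(\<Prod>b<k. z b ^ ?e b) = z a" for z :: "nat \<Rightarrow> 'a"
    using var.hyps by (simp add: if_distrib prod.If_cases)
  moreover have "(\<Sum>b<k. ?e b) = 1" using var.hyps by simp
  ultimately show ?case
    using var by (intro var.prems[of "[(1, ?e)]"]) (auto simp: monomials_eval_def)
next
  case (add D F G)
  obtain L1 L2 where "\<forall>(c, e)\<in>set L1. (\<Sum>a<k. e a) \<le> D" "F = monomials_eval k L1"
    and "\<forall>(c, e)\<in>set L2. (\<Sum>a<k. e a) \<le> D" "G = monomials_eval k L2"
    using add.IH by metis
  then show ?case by (intro add.prems[of "L1 @ L2"]) (auto simp: monomials_eval_append)
next
  case (mult D1 F D2 G D)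
  obtain L1 L2 where L1: "\<forall>(c, e)\<in>set L1. (\<Sum>a<k. e a) \<le> D1" "F = monomials_eval k L1"
    and L2: "\<forall>(c, e)\<in>set L2. (\<Sum>a<k. e a) \<le> D2" "G = monomials_eval k L2"
    using mult.IH by metis
  show ?case
  proof (rule mult.prems)
    show "\<forall>(c, e)\<in>set [(c1 * c2, \<lambda>a. e1 a + e2 a). (c1, e1) \<leftarrow> L1, (c2, e2) \<leftarrow> L2].
            (\<Sum>a<k. e a) \<le> D"
      using L1(1) L2(1) mult.hyps(3) by (fastforce simp: sum.distrib)
  qed (simp add: L1(2) L2(2) monomials_eval_mult)
qed

lemma poly_fun_le_sum:
  assumes "finite A" "\<And>a. a \<in> A \<Longrightarrow> poly_fun_le k D (f a)"
  shows "poly_fun_le k D (\<lambda>z. \<Sum>a\<in>A. f a z)"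
  using assms by (induction A rule: finite_induct) (auto intro: poly_fun_le.intros)

lemma poly_fun_le_prod:
  assumes "finite A" "\<And>a. a \<in> A \<Longrightarrow> poly_fun_le k (D a) (f a)"
  shows "poly_fun_le k (\<Sum>a\<in>A. D a) (\<lambda>z. \<Prod>a\<in>A. f a z)"
  using assms
proof (induction A rule: finite_induct)
  case (insert a A)
  then show ?case by (auto intro: poly_fun_le.mult[of k "D a" _ "sum D A"])
qed (simp add: poly_fun_le.const)

lemma poly_fun_le_power:
  "poly_fun_le k D F \<Longrightarrow> poly_fun_le k (j * D) (\<lambda>z. F z ^ j)"
  by (induction j) (auto intro: poly_fun_le.intros)

section \<open>Tensor powers of the divided difference\<close>

definition node_weight :: "(nat \<Rightarrow> 'a::field) \<Rightarrow> nat \<Rightarrow> nat \<Rightarrow> 'a" where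
  "node_weight x n p = (\<Prod>q\<in>{1..n}-{p}. x p - x q)"

text \<open>For \<open>k = 1\<close> this is the divided difference of \<open>F\<close> on the nodes \<open>x 1, \<dots>, x n\<close>;
  in general it is the \<open>k\<close>-fold tensor power of that functional.\<close>
definition divdiff :: "(nat \<Rightarrow> 'a::field) \<Rightarrow> nat \<Rightarrow> nat \<Rightarrow> ((nat \<Rightarrow> 'a) \<Rightarrow> 'a) \<Rightarrow> 'a" where
  "divdiff x n k F =
     (\<Sum>i\<in>{..<k} \<rightarrow>\<^sub>E {1..n}. F (\<lambda>a. x (i a)) / (\<Prod>a<k. node_weight x n (i a)))"

lemma divdiff_add: "divdiff x n k (\<lambda>z. F z + G z) = divdiff x n k F + divdiff x n k G"
  by (simp add: divdiff_def add_divide_distrib sum.distrib)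

lemma divdiff_cmult: "divdiff x n k (\<lambda>z. c * F z) = c * divdiff x n k F"
  by (simp add: divdiff_def sum_distrib_left)

lemma divdiff_sum:
  "finite A \<Longrightarrow> divdiff x n k (\<lambda>z. \<Sum>j\<in>A. F j z) = (\<Sum>j\<in>A. divdiff x n k (F j))"
  by (induction A rule: finite_induct) (simp add: divdiff_def, simp add: divdiff_add)

lemma divdiff_monomial:
  "divdiff x n k (\<lambda>z. \<Prod>a<k. z a ^ e a) = (\<Prod>a<k. \<Sum>p\<in>{1..n}. x p ^ e a / node_weight x n p)"
  unfolding divdiff_def by (subst prod_sum_PiE) (auto simp: prod_dividef)

lemma divdiff_monomials_eval:
  "divdiff x n k (monomials_eval k L) = (\<Sum>(c, e)\<leftarrow>L. c * divdiff x n k (\<lambda>z. \<Prod>a<k. z a ^ e a))"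
proof (induction L)
  case Nil
  then show ?case by (simp add: divdiff_def monomials_eval_def)
next
  case (Cons ce L)
  have "monomials_eval k (ce # L) = (\<lambda>z. fst ce * (\<Prod>a<k. z a ^ snd ce a) + monomials_eval k L z)"
    by (simp add: fun_eq_iff monomials_eval_def case_prod_beta)
  then show ?case
    using Cons by (simp add: divdiff_add case_prod_beta) (simp add: divdiff_def sum_distrib_left)
qed

text \<open>Each factor is a Lagrange power sum. If some exponent exceeds \<open>n - 1\<close>, the degree bound
  forces another one below \<open>n - 1\<close>, and that factor vanishes.\<close>
lemma divdiff_monomial_low:
  fixes x :: "nat \<Rightarrow> 'a::field"
  assumes inj: "inj_on x {1..n}" and "1 \<le> n" and deg: "(\<Sum>a<k. e a) \<le> k * (n - 1)"
  shows "divdiff x n k (\<lambda>z. \<Prod>a<k. z a ^ e a) = (if \<forall>a<k. e a = n - 1 then 1 else 0)"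
proof -
  have lagrange: "(\<Sum>p\<in>{1..n}. x p ^ j / node_weight x n p) = (if j = n - 1 then 1 else 0)"
    if "j \<le> n - 1" for j
    unfolding node_weight_def using lagrange_power_sum[of "{1..n}" x "n - 1" j] inj \<open>1 \<le> n\<close> that
    by simp
  show ?thesis
  proof (cases "\<forall>a<k. e a \<le> n - 1")
    case True
    then have "(\<Prod>a<k. \<Sum>p\<in>{1..n}. x p ^ e a / node_weight x n p) =
        (\<Prod>a<k. if e a = n - 1 then 1 else 0)"
    proof (intro prod.cong refl)
      fix a assume "a \<in> {..<k}"
      with True show "(\<Sum>p\<in>{1..n}. x p ^ e a / node_weight x n p) = (if e a = n - 1 then 1 else 0)"
        using lagrange[of "e a"] by simp
    qed
    then show ?thesis by (auto simp: divdiff_monomial prod_zero_iff)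
  next
    case False
    then obtain a where a: "a < k" "n - 1 < e a" by auto
    obtain b where b: "b < k" "e b < n - 1"
    proof (rule ccontr)
      assume "\<not> thesis"
      then have "\<forall>b<k. n - 1 \<le> e b" using that by force
      then have "(\<Sum>b<k. n - 1) < (\<Sum>b<k. e b)" using a by (intro sum_strict_mono_ex1) auto
      with deg show False by simp
    qed
    then have "(\<Sum>p\<in>{1..n}. x p ^ e b / node_weight x n p) = 0"
      using lagrange[of "e b"] by simp
    then show ?thesis
      using b by (auto simp: divdiff_monomial prod_zero_iff)
  qed
qed

lemma divdiff_monomials_eval_low:
  fixes x :: "nat \<Rightarrow> 'a::field"
  assumes "inj_on x {1..n}" and "1 \<le> n" and "\<forall>(c, e)\<in>set L. (\<Sum>a<k. e a) \<le> k * (n - 1)"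
  shows "divdiff x n k (monomials_eval k L) = (\<Sum>(c, e)\<leftarrow>L. if \<forall>a<k. e a = n - 1 then c else 0)"
proof -
  have "divdiff x n k (\<lambda>z. \<Prod>a<k. z a ^ e a) = (if \<forall>a<k. e a = n - 1 then 1 else 0)"
    if "(c, e) \<in> set L" for c e
    using assms that by (intro divdiff_monomial_low) auto
  then show ?thesis
    unfolding divdiff_monomials_eval by (intro arg_cong[where f = sum_list] map_cong) auto
qed

lemma divdiff_poly_fun_nodes_independent:
  fixes x y :: "nat \<Rightarrow> 'a::field"
  assumes "inj_on x {1..n}" "inj_on y {1..n}" "1 \<le> n" "poly_fun_le k (k * (n - 1)) F"
  shows "divdiff x n k F = divdiff y n k F"
proof -
  obtain L where "\<forall>(c, e)\<in>set L. (\<Sum>a<k. e a) \<le> k * (n - 1)" "F = monomials_eval k L"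
    using poly_fun_le_monomials[OF assms(4)] by blast
  then show ?thesis using assms(1-3) by (simp add: divdiff_monomials_eval_low)
qed

lemma divdiff_poly_fun_low:
  fixes x :: "nat \<Rightarrow> 'a::field"
  assumes "inj_on x {1..n}" "1 \<le> n" "poly_fun_le k D F" "D < k * (n - 1)"
  shows "divdiff x n k F = 0"
proof -
  obtain L where L: "\<forall>(c, e)\<in>set L. (\<Sum>a<k. e a) \<le> D" "F = monomials_eval k L"
    using poly_fun_le_monomials[OF assms(3)] by blast
  have deg: "\<forall>(c, e)\<in>set L. (\<Sum>a<k. e a) \<le> k * (n - 1)"
    using L(1) assms(4) by fastforce
  have "\<forall>(c, e)\<in>set L. \<not> (\<forall>a<k. e a = n - 1)"
    using L(1) assms(4) by fastforce
  then have "(\<Sum>(c, e)\<leftarrow>L. if \<forall>a<k. e a = n - 1 then c else 0) = 0"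
    by (induction L) auto
  then show ?thesis
    using divdiff_monomials_eval_low[OF assms(1,2) deg] L(2) by simp
qed

section \<open>The subset sum as a divided difference\<close>

definition pair_diff_prod :: "nat \<Rightarrow> (nat \<Rightarrow> 'a::comm_ring_1) \<Rightarrow> 'a" where
  "pair_diff_prod k z = (\<Prod>a<k. \<Prod>b\<in>{..<k}-{a}. z a - z b)"

lemma poly_fun_le_pair_diff_prod: "poly_fun_le k (k * (k - 1)) (pair_diff_prod k)"
proof -
  have diff: "poly_fun_le k 1 (\<lambda>z. z a - z b)" if "a < k" "b < k" for a b
  proof -
    have "poly_fun_le k 1 (\<lambda>z. z a + (-1) * z b)"
      using that by (intro poly_fun_le.intros) auto
    then show ?thesis by simp
  qed
  have "poly_fun_le k (\<Sum>a<k. \<Sum>b\<in>{..<k}-{a}. 1) (pair_diff_prod k)"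
    unfolding pair_diff_prod_def[abs_def] using diff by (intro poly_fun_le_prod) auto
  then show ?thesis by simp
qed

lemma pair_diff_prod_eq_0:
  assumes "a < k" "b < k" "a \<noteq> b" "z a = z b"
  shows "pair_diff_prod k z = 0"
proof -
  have "(\<Prod>c\<in>{..<k}-{a}. z a - z c) = 0"
    using assms by (intro prod_zero) (auto intro!: bexI[of _ b])
  then show ?thesis
    unfolding pair_diff_prod_def using assms(1) by (intro prod_zero) auto
qed

lemma pair_diff_prod_reindex:
  assumes i: "bij_betw i {..<k} J"
  shows "pair_diff_prod k (\<lambda>a. x (i a)) = (\<Prod>p\<in>J. \<Prod>q\<in>J-{p}. x p - x q)"
proof -
  have "(\<Prod>b\<in>{..<k}-{a}. x (i a) - x (i b)) = (\<Prod>q\<in>J-{i a}. x (i a) - x q)" if "a < k" for a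
  proof (rule prod.reindex_bij_betw)
    show "bij_betw i ({..<k} - {a}) (J - {i a})"
      using i that by (intro bij_betw_DiffI) (auto simp: bij_betw_def)
  qed
  then have "pair_diff_prod k (\<lambda>a. x (i a)) = (\<Prod>a<k. \<Prod>q\<in>J-{i a}. x (i a) - x q)"
    unfolding pair_diff_prod_def by (intro prod.cong) auto
  also have "\<dots> = (\<Prod>p\<in>J. \<Prod>q\<in>J-{p}. x p - x q)"
    using i by (rule prod.reindex_bij_betw)
  finally show ?thesis .
qed

lemma node_weight_split:
  assumes "J \<subseteq> {1..n}" "p \<in> J"
  shows "node_weight x n p = (\<Prod>q\<in>J-{p}. x p - x q) * (\<Prod>q\<in>{1..n}-J. x p - x q)"
proof -
  have "{1..n} - {p} = (J - {p}) \<union> ({1..n} - J)" using assms by auto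
  moreover have "finite J" using assms(1) finite_subset by blast
  ultimately show ?thesis
    unfolding node_weight_def by (subst prod.union_disjoint[symmetric]) auto
qed

lemma divdiff_term_bij:
  fixes x :: "nat \<Rightarrow> 'a::field"
  assumes inj: "inj_on x {1..n}" and J: "J \<subseteq> {1..n}" and i: "bij_betw i {..<k} J"
  shows "P (\<Sum>a<k. x (i a)) * pair_diff_prod k (\<lambda>a. x (i a)) / (\<Prod>a<k. node_weight x n (i a))
       = P (\<Sum>p\<in>J. x p) / (\<Prod>p\<in>J. \<Prod>q\<in>{1..n}-J. x p - x q)"
proof -
  have "finite J" using J finite_subset by blast
  have inner_nonzero: "(\<Prod>p\<in>J. \<Prod>q\<in>J-{p}. x p - x q) \<noteq> 0"
    using \<open>finite J\<close> inj J by (auto simp: prod_zero_iff inj_on_def)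
  have "(\<Prod>a<k. node_weight x n (i a)) = (\<Prod>p\<in>J. node_weight x n p)"
    using i by (rule prod.reindex_bij_betw)
  also have "\<dots> = (\<Prod>p\<in>J. \<Prod>q\<in>J-{p}. x p - x q) * (\<Prod>p\<in>J. \<Prod>q\<in>{1..n}-J. x p - x q)"
    using J by (simp add: node_weight_split prod.distrib[symmetric])
  finally show ?thesis
    using inner_nonzero
    by (simp add: pair_diff_prod_reindex[OF i] sum.reindex_bij_betw[OF i])
qed

lemma card_inj_funcset_lessThan:
  assumes "finite J" "card J = k"
  shows "card {i \<in> {..<k} \<rightarrow>\<^sub>E J. inj_on i {..<k}} = fact k"
  using card_inj_on_subset_funcset[of "{..<k}" J "{..<k}"] assms by (simp add: fact_prod_rev)

lemma inj_funcset_with_image: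
  assumes "J \<subseteq> A" "finite J" "card J = k"
  shows "{i \<in> {..<k} \<rightarrow>\<^sub>E A. inj_on i {..<k} \<and> i ` {..<k} = J}
       = {i \<in> {..<k} \<rightarrow>\<^sub>E J. inj_on i {..<k}}"
proof (intro set_eqI iffI)
  fix i assume "i \<in> {i \<in> {..<k} \<rightarrow>\<^sub>E A. inj_on i {..<k} \<and> i ` {..<k} = J}"
  then show "i \<in> {i \<in> {..<k} \<rightarrow>\<^sub>E J. inj_on i {..<k}}" by (auto simp: PiE_iff)
next
  fix i assume i: "i \<in> {i \<in> {..<k} \<rightarrow>\<^sub>E J. inj_on i {..<k}}"
  then have "i ` {..<k} \<subseteq> J" "card (i ` {..<k}) = k" by (auto simp: PiE_iff card_image)
  then have "i ` {..<k} = J" using assms card_subset_eq by metis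
  with i assms(1) show "i \<in> {i \<in> {..<k} \<rightarrow>\<^sub>E A. inj_on i {..<k} \<and> i ` {..<k} = J}"
    by (auto simp: PiE_iff)
qed

text \<open>Tuples with a repeated entry are killed by the pair product; the remaining ones are
  grouped by their image, each \<open>k\<close>-subset arising from exactly \<open>k!\<close> of them.\<close>
lemma divdiff_eq_subset_sum:
  fixes x :: "nat \<Rightarrow> 'a::field_char_0"
  assumes inj: "inj_on x {1..n}"
  shows "divdiff x n k (\<lambda>z. P (\<Sum>a<k. z a) * pair_diff_prod k z) =
    fact k * (\<Sum>J\<in>{J. J \<subseteq> {1..n} \<and> card J = k}.
                P (\<Sum>p\<in>J. x p) / (\<Prod>p\<in>J. \<Prod>q\<in>{1..n}-J. x p - x q))"
proof -
  define Fun where "Fun = {..<k} \<rightarrow>\<^sub>E {1..n}"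
  define K where "K = {J. J \<subseteq> {1..n} \<and> card J = k}"
  define g where "g i = P (\<Sum>a<k. x (i a)) * pair_diff_prod k (\<lambda>a. x (i a)) /
                          (\<Prod>a<k. node_weight x n (i a))" for i
  define h where "h J = P (\<Sum>p\<in>J. x p) / (\<Prod>p\<in>J. \<Prod>q\<in>{1..n}-J. x p - x q)" for J
  have "finite Fun" unfolding Fun_def by (simp add: finite_PiE)
  have "finite K" unfolding K_def by (rule finite_subset[of _ "Pow {1..n}"]) auto
  have image_in_K: "i ` {..<k} \<in> K" if "i \<in> Fun" "inj_on i {..<k}" for i
    using that by (auto simp: K_def Fun_def PiE_iff card_image)
  have group: "(\<Sum>i\<in>{i \<in> Fun. inj_on i {..<k} \<and> i ` {..<k} = J}. g i) = fact k * h J"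
    if "J \<in> K" for J
  proof -
    have J: "J \<subseteq> {1..n}" "finite J" "card J = k"
      using that finite_subset by (auto simp: K_def)
    have "g i = h J" if "i \<in> {i \<in> {..<k} \<rightarrow>\<^sub>E J. inj_on i {..<k}}" for i
    proof -
      have "bij_betw i {..<k} J"
        using that inj_funcset_with_image[OF J] by (auto simp: bij_betw_def)
      then show ?thesis unfolding g_def h_def using divdiff_term_bij[OF inj J(1)] by blast
    qed
    then show ?thesis
      using inj_funcset_with_image[OF J] card_inj_funcset_lessThan[of J k] J
      by (simp add: Fun_def)
  qed
  have "divdiff x n k (\<lambda>z. P (\<Sum>a<k. z a) * pair_diff_prod k z) = (\<Sum>i\<in>Fun. g i)"
    by (simp add: divdiff_def Fun_def g_def)
  also have "\<dots> = (\<Sum>i\<in>{i \<in> Fun. inj_on i {..<k}}. g i)"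
    using \<open>finite Fun\<close>
    by (intro sum.mono_neutral_right)
      (auto simp: g_def inj_on_def intro: pair_diff_prod_eq_0[where z = "\<lambda>a. x (_ a)"])
  also have "\<dots> = (\<Sum>J\<in>K. \<Sum>i\<in>{i \<in> {i \<in> Fun. inj_on i {..<k}}. i ` {..<k} = J}. g i)"
    using \<open>finite Fun\<close> \<open>finite K\<close> image_in_K by (intro sum.group[symmetric]) auto
  also have "\<dots> = (\<Sum>J\<in>K. fact k * h J)"
    using group by (intro sum.cong) (simp_all add: conj_assoc)
  finally show ?thesis by (simp add: K_def h_def sum_distrib_left)
qed

lemma poly_fun_le_sum_power_pair_diff_prod:
  "poly_fun_le k (j + k * (k - 1)) (\<lambda>z. (\<Sum>a<k. z a) ^ j * pair_diff_prod k z)"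
proof -
  have "poly_fun_le k 1 (\<lambda>z. \<Sum>a<k. z a)"
    by (intro poly_fun_le_sum poly_fun_le.var) auto
  from poly_fun_le_power[OF this, of j] show ?thesis
    using poly_fun_le_pair_diff_prod by (intro poly_fun_le.mult) auto
qed

text \<open>Only the leading term \<open>s\<^sup>N\<close> of \<open>\<Prod>\<^sub>r (s - m r)\<close> survives: the lower ones give
  polynomials of degree below \<open>k (n - 1)\<close>.\<close>
lemma subset_sum_eq_divdiff:
  fixes x m :: "nat \<Rightarrow> 'a::field_char_0"
  assumes "1 \<le> k" "k \<le> n" "inj_on x {1..n}"
  shows "fact k * (\<Sum>J\<in>{J. J \<subseteq> {1..n} \<and> card J = k}.
            (\<Prod>r=1..k*(n-k). (\<Sum>i\<in>J. x i) - m r) / (\<Prod>i\<in>J. \<Prod>j\<in>{1..n} - J. (x i - x j)))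
       = divdiff x n k (\<lambda>z. (\<Sum>a<k. z a) ^ (k * (n - k)) * pair_diff_prod k z)"
proof -
  define N where "N = k * (n - k)"
  define G where "G j = (\<lambda>z :: nat \<Rightarrow> 'a. (\<Sum>a<k. z a) ^ j * pair_diff_prod k z)" for j
  have deg: "N + k * (k - 1) = k * (n - 1)"
    using assms(1,2) by (simp add: N_def diff_mult_distrib2 algebra_simps)
  obtain b where b: "\<And>s. (\<Prod>r=1..N. s - m r) = s ^ N + (\<Sum>j<N. b j * s ^ j)"
    using prod_linear_expand[of "{1..N}" m] by auto
  have low: "divdiff x n k (G j) = 0" if "j < N" for j
    using that assms deg unfolding G_def
    by (intro divdiff_poly_fun_low[OF assms(3) _ poly_fun_le_sum_power_pair_diff_prod]) auto
  have "fact k * (\<Sum>J\<in>{J. J \<subseteq> {1..n} \<and> card J = k}.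
            (\<Prod>r=1..N. (\<Sum>i\<in>J. x i) - m r) / (\<Prod>i\<in>J. \<Prod>j\<in>{1..n} - J. (x i - x j)))
      = divdiff x n k (\<lambda>z. (\<Prod>r=1..N. (\<Sum>a<k. z a) - m r) * pair_diff_prod k z)"
    using divdiff_eq_subset_sum[OF assms(3), where P = "\<lambda>s. \<Prod>r=1..N. s - m r"] by simp
  also have "\<dots> = divdiff x n k (\<lambda>z. G N z + (\<Sum>j<N. b j * G j z))"
    unfolding b G_def by (simp add: algebra_simps sum_distrib_left)
  also have "\<dots> = divdiff x n k (G N)"
    by (simp add: divdiff_add divdiff_sum divdiff_cmult low)
  finally show ?thesis by (simp add: N_def G_def)
qed

lemma subset_sum_nodes_independent:
  fixes x y m m' :: "nat \<Rightarrow> 'a::field_char_0"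
  assumes "1 \<le> k" "k \<le> n" "inj_on x {1..n}" "inj_on y {1..n}"
  shows "(\<Sum>J\<in>{J. J \<subseteq> {1..n} \<and> card J = k}.
            (\<Prod>r=1..k*(n-k). (\<Sum>i\<in>J. x i) - m r) / (\<Prod>i\<in>J. \<Prod>j\<in>{1..n} - J. (x i - x j)))
       = (\<Sum>J\<in>{J. J \<subseteq> {1..n} \<and> card J = k}.
            (\<Prod>r=1..k*(n-k). (\<Sum>i\<in>J. y i) - m' r) / (\<Prod>i\<in>J. \<Prod>j\<in>{1..n} - J. (y i - y j)))"
    (is "?Sx = ?Sy")
proof -
  have "k * (n - k) + k * (k - 1) = k * (n - 1)"
    using assms(1,2) by (simp add: diff_mult_distrib2 algebra_simps)
  then have "divdiff x n k (\<lambda>z. (\<Sum>a<k. z a) ^ (k * (n - k)) * pair_diff_prod k z)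
           = divdiff y n k (\<lambda>z. (\<Sum>a<k. z a) ^ (k * (n - k)) * pair_diff_prod k z)"
    using assms poly_fun_le_sum_power_pair_diff_prod[of k "k * (n - k)"]
    by (intro divdiff_poly_fun_nodes_independent) auto
  then have "fact k * ?Sx = fact k * ?Sy"
    using subset_sum_eq_divdiff[OF assms(1-3), of m] subset_sum_eq_divdiff[OF assms(1,2,4), of m']
    by simp
  then show ?thesis by simp
qed

section \<open>Evaluation at a special point\<close>

lemma sum_less_sum_if_separated:
  fixes A B :: "nat set"
  assumes "finite A" "finite B" "card A = card B" "A \<noteq> B" "\<forall>a\<in>A-B. \<forall>b\<in>B-A. a < b"
  shows "\<Sum>A < \<Sum>B"
proof -
  have card_diff: "card (A - B) = card (B - A)"
    using assms(1-3) by (simp add: card_Diff_subset_Int Int_commute)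
  have "A - B \<noteq> {}"
    using assms(1-4) card_subset_eq[of B A] by auto
  define M where "M = Max (A - B)"
  have "M \<in> A - B"
    unfolding M_def using \<open>A - B \<noteq> {}\<close> assms(1) by (intro Max_in) auto
  have "\<forall>a\<in>A-B. a \<le> M"
    unfolding M_def using assms(1) by simp
  have "\<Sum>(A - B) \<le> card (A - B) * M"
    using sum_bounded_above[of "A - B" id M] \<open>\<forall>a\<in>A-B. a \<le> M\<close> by simp
  also have "\<dots> < card (A - B) * (M + 1)"
    using \<open>A - B \<noteq> {}\<close> assms(1) by (simp add: card_gt_0_iff)
  also have "\<dots> \<le> \<Sum>(B - A)"
    using sum_bounded_below[of "B - A" "M + 1" id] \<open>M \<in> A - B\<close> assms(5) card_diff
    by (simp add: Suc_le_eq)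
  finally show ?thesis
    using sum.Int_Diff[OF assms(1), of id B] sum.Int_Diff[OF assms(2), of id A]
    by (simp add: Int_commute)
qed

lemma sum_initial_le_subset_sum:
  fixes J :: "nat set"
  assumes "J \<subseteq> {1..n}" "card J = k"
  shows "\<Sum>{1..k} \<le> \<Sum>J"
proof (cases "J = {1..k}")
  case False
  have "\<forall>a\<in>{1..k}-J. \<forall>b\<in>J-{1..k}. a < b" using assms(1) by auto
  then have "\<Sum>{1..k} < \<Sum>J"
    using False assms finite_subset[OF assms(1)]
    by (intro sum_less_sum_if_separated) auto
  then show ?thesis by simp
qed simp

lemma subset_sum_less_sum_final:
  fixes J :: "nat set"
  assumes "J \<subseteq> {1..n}" "card J = k" "J \<noteq> {n-k+1..n}"
  shows "\<Sum>J < \<Sum>{n-k+1..n}"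
proof (rule sum_less_sum_if_separated)
  show "\<forall>a\<in>J-{n-k+1..n}. \<forall>b\<in>{n-k+1..n}-J. a < b" using assms(1) by auto
  show "finite J" using assms(1) finite_subset by blast
  show "card J = card {n-k+1..n}"
    using assms(1,2) card_mono[OF finite_atLeastAtMost assms(1)] by simp
qed (use assms in auto)

lemma sum_atLeastAtMost_shift:
  fixes d k :: nat
  shows "\<Sum>{d+1..d+k} = \<Sum>{1..k} + k * d"
  using sum.shift_bounds_cl_nat_ivl[of id 1 d k] by (simp add: sum.distrib add.commute)

lemma fact_mult_prod_diff:
  "fact t * (\<Prod>j\<in>{1..d}. d + Suc t - j) = (fact (d + t) :: nat)"
proof -
  have "(\<Prod>j\<in>{1..d}. d + Suc t - j) = \<Prod>{Suc t..d + t}"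
    by (rule prod.reindex_bij_witness[where i = "\<lambda>i. d + Suc t - i" and j = "\<lambda>i. d + Suc t - i"])
      auto
  then show ?thesis using fact_eq_fact_times[of t "d + t"] by simp
qed

lemma prod_diff_final_initial:
  fixes d k :: nat
  shows "(\<Prod>i\<in>{d+1..d+k}. \<Prod>j\<in>{1..d}. i - j) * (\<Prod>t\<in>{1..k}. fact (t - 1))
       = (\<Prod>t\<in>{1..k}. fact (d + k - t))"
proof -
  have "(\<Prod>i\<in>{d+1..d+k}. \<Prod>j\<in>{1..d}. i - j) = (\<Prod>t\<in>{1..k}. \<Prod>j\<in>{1..d}. d + t - j)"
    using prod.shift_bounds_cl_nat_ivl[of "\<lambda>i. \<Prod>j\<in>{1..d}. i - j" 1 d k]
    by (simp add: add.commute)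
  then have "(\<Prod>i\<in>{d+1..d+k}. \<Prod>j\<in>{1..d}. i - j) * (\<Prod>t\<in>{1..k}. fact (t - 1))
      = (\<Prod>t\<in>{1..k}. fact (t - 1) * (\<Prod>j\<in>{1..d}. d + t - j))"
    by (simp add: prod.distrib mult.commute)
  also have "\<dots> = (\<Prod>t\<in>{1..k}. fact (d + t - 1))"
  proof (intro prod.cong refl)
    fix t assume "t \<in> {1..k}"
    then obtain s where "t = Suc s" by (cases t) auto
    then show "fact (t - 1) * (\<Prod>j\<in>{1..d}. d + t - j) = fact (d + t - 1)"
      using fact_mult_prod_diff[of s d] by simp
  qed
  also have "\<dots> = (\<Prod>t\<in>{1..k}. fact (d + k - t))"
    by (rule prod.reindex_bij_witness[where i = "\<lambda>t. k + 1 - t" and j = "\<lambda>t. k + 1 - t"]) auto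
  finally show ?thesis .
qed

lemma prod_diff_final_initial_of_nat:
  "(\<Prod>i\<in>{d+1..d+k}. \<Prod>j\<in>{1..d+k} - {d+1..d+k}. (of_nat i - of_nat j :: 'a::field_char_0))
     * (\<Prod>t=1..k. fact (t - 1)) = (\<Prod>t=1..k. fact (d + k - t))"
proof -
  have "{1..d+k} - {d+1..d+k} = {1..d}" by auto
  then have "(\<Prod>i\<in>{d+1..d+k}. \<Prod>j\<in>{1..d+k} - {d+1..d+k}. (of_nat i - of_nat j :: 'a))
      = of_nat (\<Prod>i\<in>{d+1..d+k}. \<Prod>j\<in>{1..d}. i - j)"
    by (simp add: of_nat_diff)
  then show ?thesis
    using arg_cong[OF prod_diff_final_initial[of d k], of "of_nat :: nat \<Rightarrow> 'a"]
    by (simp add: of_nat_prod)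
qed

lemma prod_of_nat_minus_interval_eq_0:
  assumes "lo \<le> s" "s < lo + N"
  shows "(\<Prod>r=1..N. of_nat s - of_nat (lo + N - r) :: 'a::comm_ring_1) = 0"
proof -
  have "lo + N - s \<in> {1..N}" "lo + N - (lo + N - s) = s" using assms by auto
  then show ?thesis by (intro prod_zero) (auto intro!: bexI[of _ "lo + N - s"])
qed

lemma prod_of_nat_minus_interval_eq_fact:
  "(\<Prod>r=1..N. of_nat (lo + N) - of_nat (lo + N - r)) = (fact N :: 'a::{comm_ring_1,semiring_char_0})"
proof -
  have "(\<Prod>r=1..N. of_nat (lo + N) - of_nat (lo + N - r)) = (\<Prod>r=1..N. of_nat r :: 'a)"
    by (intro prod.cong) (auto simp: of_nat_diff)
  also have "\<dots> = fact N" by (simp add: fact_prod)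
  finally show ?thesis .
qed

text \<open>The \<open>m r\<close> run through the integers from \<open>\<Sum>{1..k}\<close> to \<open>\<Sum>{1..k} + N - 1\<close>, which contain
  the element sum of every \<open>k\<close>-subset of \<open>{1..n}\<close> except the final segment \<open>{n-k+1..n}\<close>.\<close>
lemma subset_sum_special_value:
  assumes "k \<le> n"
  shows "(\<Sum>J\<in>{J. J \<subseteq> {1..n} \<and> card J = k}.
            (\<Prod>r=1..k*(n-k). (\<Sum>i\<in>J. of_nat i) - of_nat (\<Sum>{1..k} + k*(n-k) - r)) /
            (\<Prod>i\<in>J. \<Prod>j\<in>{1..n} - J. (of_nat i - of_nat j)))
         = (fact (k*(n-k)) :: 'a::field_char_0) * (\<Prod>i=1..k. fact (i-1) / fact (n-i))"
proof -
  define d where "d = n - k"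
  have n: "n = d + k" using assms by (simp add: d_def)
  define N where "N = k * d"
  define lo where "lo = \<Sum>{1..k}"
  define top where "top = {d+1..d+k}"
  define K where "K = {J. J \<subseteq> {1..n} \<and> card J = k}"
  define f where "f J = (\<Prod>r=1..N. (\<Sum>i\<in>J. of_nat i) - of_nat (lo + N - r)) /
                        (\<Prod>i\<in>J. \<Prod>j\<in>{1..n} - J. (of_nat i - of_nat j :: 'a))" for J
  have sum_top: "\<Sum>top = lo + N"
    unfolding top_def lo_def N_def by (rule sum_atLeastAtMost_shift)
  have sum_top_of_nat: "(\<Sum>i\<in>top. of_nat i :: 'a) = of_nat (lo + N)"
    by (simp add: sum_top flip: of_nat_sum)
  have "finite K" unfolding K_def by (rule finite_subset[of _ "Pow {1..n}"]) auto
  have "top \<in> K" unfolding K_def top_def n by auto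
  have "f J = 0" if "J \<in> K - {top}" for J
  proof -
    have J: "J \<subseteq> {1..n}" "card J = k" "J \<noteq> {n-k+1..n}"
      using that by (auto simp: K_def top_def n)
    have "lo \<le> \<Sum>J" "\<Sum>J < lo + N"
      using sum_initial_le_subset_sum[OF J(1,2)] subset_sum_less_sum_final[OF J] sum_top
      by (simp_all add: lo_def top_def n)
    then show ?thesis
      using prod_of_nat_minus_interval_eq_0[where 'a = 'a] by (simp add: f_def flip: of_nat_sum)
  qed
  then have "(\<Sum>J\<in>K. f J) = f top"
    using sum.remove[OF \<open>finite K\<close> \<open>top \<in> K\<close>, of f] by (simp add: sum.neutral)
  also have "f top = fact N / (\<Prod>i\<in>top. \<Prod>j\<in>{1..n} - top. (of_nat i - of_nat j :: 'a))"
    unfolding f_def sum_top_of_nat prod_of_nat_minus_interval_eq_fact by (rule refl)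
  also have "\<dots> = fact N * (\<Prod>t=1..k. fact (t - 1) / fact (n - t))"
  proof -
    let ?D = "\<Prod>i\<in>top. \<Prod>j\<in>{1..n} - top. (of_nat i - of_nat j :: 'a)"
    let ?F = "\<Prod>t=1..k. fact (t - 1) :: 'a"
    have "(\<Prod>t=1..k. fact (n - t)) = ?D * ?F"
      using prod_diff_final_initial_of_nat[of d k, where 'a = 'a] by (simp add: top_def n)
    moreover have "?F \<noteq> 0" by simp
    ultimately show ?thesis by (simp add: prod_dividef)
  qed
  finally show ?thesis by (simp add: K_def f_def N_def lo_def n)
qed

theorem mainTheorem14:
  fixes k n :: nat and x m :: "nat \<Rightarrow> 'a::field_char_0"
  assumes "1 \<le> k" and "k \<le> n" and "inj_on x {1..n}"
  shows "(\<Sum>J\<in>{J. J \<subseteq> {1..n} \<and> card J = k}.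
            (\<Prod>r=1..k*(n-k). (\<Sum>i\<in>J. x i) - m r) /
            (\<Prod>i\<in>J. \<Prod>j\<in>{1..n} - J. (x i - x j)))
         = (fact (k*(n-k)) :: 'a) * (\<Prod>i=1..k. (fact (i-1) :: 'a) / fact (n-i))"
proof -
  have "inj_on (of_nat :: nat \<Rightarrow> 'a) {1..n}" by (simp add: inj_on_def)
  from subset_sum_nodes_independent[OF assms this,
      where m' = "\<lambda>r. of_nat (\<Sum>{1..k} + k * (n - k) - r)" and m = m]
  show ?thesis using subset_sum_special_value[OF assms(2), where 'a = 'a] by simp
qed

end
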